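(* Forgetting the rack structure on the domain defines a one-to-one correspondence between crossed modules of racks and generalized augmented racks. Explicitly: if $\mu:X\to R$ is a crossed module of racks, then $(R,X,\mu)$, with $X$ regarded merely as an $R$-set, is a generalized augmented rack; conversely, if $(R,X,p)$ is a generalized augmented rack, then $X$ with the operation $x\lhd y:=x\cdot p(y)$ is a rack and $p:X\to R$, together with the given action of $R$ on $X$, is a crossed module of racks; and these two constructions are mutually inverse.
   Context: A (right) rack is a set $X$ with a binary operation $(x,y)\mapsto x\lhd y$ such that each map $x\mapsto x\lhd y$ is a bijection of $X$ and $(x\lhd y)\lhd z=(x\lhd z)\lhd(y\lhd z)$ for all $x,y,z\in X$. A morphism of racks is a map $\mu$ with $\mu(r\lhd r')=\mu(r)\lhd\mu(r')$. If $R$ is a rack and $X$ a set, an action of $R$ on $X$ (making $X$ an $R$-set, or $R$-module) is a family of bijections $x\mapsto x\cdot r$ of $X$, one for each $r\in R$, such that $(x\cdot r)\cdot r'=(x\cdot r')\cdot(r\lhd r')$ for all $x\in X$, $r,r'\in R$. If $X$ is itself a rack, the action is by automorphisms if moreover $(x\lhd x')\cdot r=(x\cdot r)\lhd(x'\cdot r)$. A crossed module of racks is a morphism of racks $\mu:R\to S$ together with an action of $S$ on $R$ by automorphisms such that (1) $\mu(r\cdot s)=\mu(r)\lhd s$ for all $r\in R$, $s\in S$, and (2) (Peiffer identity) $r\cdot\mu(r')=r\lhd r'$ for all $r,r'\in R$. A generalized augmented rack is a triple $(R,X,p)$ where $R$ is a rack, $X$ is an $R$-set, and $p:X\to R$ is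 a map with $p(x\cdot r)=p(x)\lhd r$ for all $x\in X$, $r\in R$. *)

theory Defs
  imports Main
begin

text \<open>Racks are modelled on whole types: a rack structure on type 'a is a binary operation.\<close>

definition rack :: "('a \<Rightarrow> 'a \<Rightarrow> 'a) \<Rightarrow> bool" where
  "rack op \<longleftrightarrow> (\<forall>y. bij (\<lambda>x. op x y)) \<and>
     (\<forall>x y z. op (op x y) z = op (op x z) (op y z))"

definition rack_morphism :: "('a \<Rightarrow> 'a \<Rightarrow> 'a) \<Rightarrow> ('b \<Rightarrow> 'b \<Rightarrow> 'b) \<Rightarrow> ('a \<Rightarrow> 'b) \<Rightarrow> bool" where
  "rack_morphism opA opB f \<longleftrightarrow> (\<forall>r r'. f (opA r r') = opB (f r) (f r'))"

definition rack_action :: "('r \<Rightarrow> 'r \<Rightarrow> 'r) \<Rightarrow> ('x \<Rightarrow> 'r \<Rightarrow> 'x) \<Rightarrow> bool" where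
  "rack_action opR act \<longleftrightarrow> (\<forall>r. bij (\<lambda>x. act x r)) \<and>
     (\<forall>x r r'. act (act x r) r' = act (act x r') (opR r r'))"

definition rack_action_by_aut :: "('r \<Rightarrow> 'r \<Rightarrow> 'r) \<Rightarrow> ('x \<Rightarrow> 'x \<Rightarrow> 'x) \<Rightarrow> ('x \<Rightarrow> 'r \<Rightarrow> 'x) \<Rightarrow> bool" where
  "rack_action_by_aut opR opX act \<longleftrightarrow> rack_action opR act \<and>
     (\<forall>x x' r. act (opX x x') r = opX (act x r) (act x' r))"

definition crossed_module ::
  "('r \<Rightarrow> 'r \<Rightarrow> 'r) \<Rightarrow> ('s \<Rightarrow> 's \<Rightarrow> 's) \<Rightarrow> ('r \<Rightarrow> 's) \<Rightarrow> ('r \<Rightarrow> 's \<Rightarrow> 'r) \<Rightarrow> bool" where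
  "crossed_module opR opS mu act \<longleftrightarrow> rack opR \<and> rack opS \<and> rack_morphism opR opS mu \<and>
     rack_action_by_aut opS opR act \<and>
     (\<forall>r s. mu (act r s) = opS (mu r) s) \<and>
     (\<forall>r r'. act r (mu r') = opR r r')"

definition gen_aug_rack :: "('r \<Rightarrow> 'r \<Rightarrow> 'r) \<Rightarrow> ('x \<Rightarrow> 'r \<Rightarrow> 'x) \<Rightarrow> ('x \<Rightarrow> 'r) \<Rightarrow> bool" where
  "gen_aug_rack opR act p \<longleftrightarrow> rack opR \<and> rack_action opR act \<and>
     (\<forall>x r. p (act x r) = opR (p x) r)"

end

theory Submission
  imports Defs
begin

text \<open>The Peiffer identity forces the rack operation on the domain to be \<open>x \<lhd> y = x \<cdot> p(y)\<close>,
  so a crossed module is determined by its underlying generalized augmented rack. Conversely,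
  for that operation both the rack axiom and the automorphism property are instances of the
  action axiom \<open>(x \<cdot> r) \<cdot> s = (x \<cdot> s) \<cdot> (r \<lhd> s)\<close> combined with equivariance of \<open>p\<close>.\<close>

lemma crossed_module_imp_gen_aug_rack:
  assumes "crossed_module opX opR p act"
  shows "gen_aug_rack opR act p"
  using assms unfolding crossed_module_def gen_aug_rack_def rack_action_by_aut_def by blast

lemma crossed_module_op_eq:
  assumes "crossed_module opX opR p act"
  shows "opX = (\<lambda>x y. act x (p y))"
  using assms unfolding crossed_module_def by (auto intro!: ext)

lemma gen_aug_rack_act_op:
  assumes "gen_aug_rack opR act p"
  shows "act (act x (p y)) r = act (act x r) (p (act y r))"
proof -
  have "act (act x (p y)) r = act (act x r) (opR (p y) r)"
    using assms unfolding gen_aug_rack_def rack_action_def by blast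
  also have "opR (p y) r = p (act y r)"
    using assms unfolding gen_aug_rack_def by simp
  finally show ?thesis .
qed

lemma gen_aug_rack_induced_rack:
  assumes "gen_aug_rack opR act p"
  shows "rack (\<lambda>x y. act x (p y))"
  unfolding rack_def
proof (intro conjI allI)
  show "bij (\<lambda>x. act x (p y))" for y
    using assms unfolding gen_aug_rack_def rack_action_def by blast
  show "act (act x (p y)) (p z) = act (act x (p z)) (p (act y (p z)))" for x y z
    using gen_aug_rack_act_op[OF assms] .
qed

lemma gen_aug_rack_imp_crossed_module:
  assumes "gen_aug_rack opR act p"
  shows "crossed_module (\<lambda>x y. act x (p y)) opR p act"
proof -
  have "rack opR" and "rack_action opR act" and equivariant: "\<And>x r. p (act x r) = opR (p x) r"
    using assms unfolding gen_aug_rack_def by auto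
  moreover have "rack_morphism (\<lambda>x y. act x (p y)) opR p"
    unfolding rack_morphism_def using equivariant by simp
  moreover have "rack_action_by_aut opR (\<lambda>x y. act x (p y)) act"
    unfolding rack_action_by_aut_def
    using \<open>rack_action opR act\<close> gen_aug_rack_act_op[OF assms] by simp
  ultimately show ?thesis
    unfolding crossed_module_def using gen_aug_rack_induced_rack[OF assms] by simp
qed

theorem mainTheorem1:
  fixes opR :: "'r \<Rightarrow> 'r \<Rightarrow> 'r" and act :: "'x \<Rightarrow> 'r \<Rightarrow> 'x" and p :: "'x \<Rightarrow> 'r"
  shows "(\<forall>opX. crossed_module opX opR p act \<longrightarrow> gen_aug_rack opR act p)
    \<and> (gen_aug_rack opR act p \<longrightarrow> rack (\<lambda>x y. act x (p y))
          \<and> crossed_module (\<lambda>x y. act x (p y)) opR p act)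
    \<and> (\<forall>opX. crossed_module opX opR p act \<longrightarrow> opX = (\<lambda>x y. act x (p y)))"
  using crossed_module_imp_gen_aug_rack gen_aug_rack_induced_rack
    gen_aug_rack_imp_crossed_module crossed_module_op_eq
  by blast

end
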